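(* Let $T=(L,R,\tau)$ be a rewrite rule without cloning (i.e. $L,R$ are termgraphs and $\tau:|L|\to|R|$ is a total function) and let $m:L\to G$ be a graph morphism such that $|m|$ is injective. Then there exists a heterogeneous pushout of $T$ and $m$, i.e. an initial object in the category of heterogeneous cones over $T$ and $m$. Moreover, if $(\mathcal{H},\tau_1,\delta)$ is a pushout of $\tau$ and $|m|$ in the category of sets (so $\delta\circ\tau=\tau_1\circ|m|$ with $\tau_1:|G|\to\mathcal{H}$, $\delta:|R|\to\mathcal{H}$), then there is a unique graph $H$ with set of nodes $\mathcal{H}$ such that $\tau_1$ is strictly graphic on $|G|-|m(L)|$ and $\delta$ is strictly graphic on $|R|$; $\delta$ underlies a graph morphism $d:R\to H$, and $(H,\tau_1,d)$ is a heterogeneous pushout of $T$ and $m$.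
   Context: A signature $\Omega$ assigns an arity $\mathrm{ar}(\omega)\in\mathbb{N}$ to each symbol. For a function $f$, $f^*$ acts letterwise on strings. A termgraph (graph) $G=(\mathcal{N}_G,\mathcal{D}_G,\mathcal{L}_G,\mathcal{S}_G)$ has node set $|G|=\mathcal{N}_G$, labeled nodes $\mathcal{D}_G\subseteq\mathcal{N}_G$, labeling $\mathcal{L}_G:\mathcal{D}_G\to\Omega$ and successors $\mathcal{S}_G:\mathcal{D}_G\to\mathcal{N}_G^*$ with $|\mathcal{S}_G(n)|=\mathrm{ar}(\mathcal{L}_G(n))$. A graph morphism $g:G\to H$ is a function $g:|G|\to|H|$ with $g(\mathcal{D}_G)\subseteq\mathcal{D}_H$ and, for each labeled $n$, $\mathcal{L}_H(g(n))=\mathcal{L}_G(n)$ and $\mathcal{S}_H(g(n))=g^*(\mathcal{S}_G(n))$ (unlabeled nodes may map anywhere). A function $\gamma:|G|\to|H|$ is graphic at $n$ if $n$ is unlabeled or both $n,\gamma(n)$ are labeled with $\mathcal{L}_H(\gamma(n))=\mathcal{L}_G(n)$, $\mathcal{S}_H(\gamma(n))=\gamma^*(\mathcal{S}_G(n))$; strictly graphic at $n$ if both $n,\gamma(n)$ are unlabeled or both are labeled with these two equalities; (strictly) graphic on a set if so at each of its nodes. A rewrite rule without cloning is $T=(L,R,\tau)$ with $\tau:|L|\to|R|$ a function; a morphism of such rules $(L,R,\tau)\to(L_1,R_1,\tau_1)$ is a pair of graph morphisms $m:L\to L_1$, $d:R\to R_1$ with $|d|\circ\tau=\tau_1\circ|m|$.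 A heterogeneous cone over $T$ and $m:L\to G$ is a triple $(H,\tau_1,d)$ with $H$ a graph, $\tau_1:|G|\to|H|$ a function, $d:R\to H$ a graph morphism, such that $|d|\circ\tau=\tau_1\circ|m|$ and $\tau_1$ is graphic on $|G|-|m(L)|$. A morphism of heterogeneous cones $(H,\tau_1,d)\to(H',\tau_1',d')$ is a graph morphism $h:H\to H'$ with $|h|\circ\tau_1=\tau_1'$ and $h\circ d=d'$. *)

theory Defs
  imports Main
begin

text \<open>Termgraphs over a signature given by an arity function ar :: 'l => nat.
  Node type 'n; nodes, labeled nodes, labeling and successor functions
  (the latter two are only meaningful on labeled nodes).\<close>

record ('n, 'l) tgraph =
  nodes :: "'n set"
  labeled :: "'n set"
  lab :: "'n \<Rightarrow> 'l"
  succ :: "'n \<Rightarrow> 'n list"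

definition wf_graph :: "('l \<Rightarrow> nat) \<Rightarrow> ('n, 'l) tgraph \<Rightarrow> bool" where
  "wf_graph ar G \<longleftrightarrow> labeled G \<subseteq> nodes G \<and>
     (\<forall>n\<in>labeled G. set (succ G n) \<subseteq> nodes G \<and> length (succ G n) = ar (lab G n))"

definition same_graph :: "('n, 'l) tgraph \<Rightarrow> ('n, 'l) tgraph \<Rightarrow> bool" where
  "same_graph G H \<longleftrightarrow> nodes G = nodes H \<and> labeled G = labeled H \<and>
     (\<forall>n\<in>labeled G. lab G n = lab H n \<and> succ G n = succ H n)"

definition graph_morphism :: "('a, 'l) tgraph \<Rightarrow> ('b, 'l) tgraph \<Rightarrow> ('a \<Rightarrow> 'b) \<Rightarrow> bool" where
  "graph_morphism G H g \<longleftrightarrow> g ` nodes G \<subseteq> nodes H \<and> g ` labeled G \<subseteq> labeled H \<and>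
     (\<forall>n\<in>labeled G. lab H (g n) = lab G n \<and> succ H (g n) = map g (succ G n))"

definition graphic_at :: "('a, 'l) tgraph \<Rightarrow> ('b, 'l) tgraph \<Rightarrow> ('a \<Rightarrow> 'b) \<Rightarrow> 'a \<Rightarrow> bool" where
  "graphic_at G H \<gamma> n \<longleftrightarrow> n \<notin> labeled G \<or>
     (n \<in> labeled G \<and> \<gamma> n \<in> labeled H \<and> lab H (\<gamma> n) = lab G n \<and> succ H (\<gamma> n) = map \<gamma> (succ G n))"

definition strictly_graphic_at :: "('a, 'l) tgraph \<Rightarrow> ('b, 'l) tgraph \<Rightarrow> ('a \<Rightarrow> 'b) \<Rightarrow> 'a \<Rightarrow> bool" where
  "strictly_graphic_at G H \<gamma> n \<longleftrightarrow> (n \<notin> labeled G \<and> \<gamma> n \<notin> labeled H) \<or>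
     (n \<in> labeled G \<and> \<gamma> n \<in> labeled H \<and> lab H (\<gamma> n) = lab G n \<and> succ H (\<gamma> n) = map \<gamma> (succ G n))"

definition graphic_on :: "('a, 'l) tgraph \<Rightarrow> ('b, 'l) tgraph \<Rightarrow> ('a \<Rightarrow> 'b) \<Rightarrow> 'a set \<Rightarrow> bool" where
  "graphic_on G H \<gamma> S \<longleftrightarrow> (\<forall>n\<in>S. graphic_at G H \<gamma> n)"

definition strictly_graphic_on :: "('a, 'l) tgraph \<Rightarrow> ('b, 'l) tgraph \<Rightarrow> ('a \<Rightarrow> 'b) \<Rightarrow> 'a set \<Rightarrow> bool" where
  "strictly_graphic_on G H \<gamma> S \<longleftrightarrow> (\<forall>n\<in>S. strictly_graphic_at G H \<gamma> n)"

definition het_cone ::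
  "('l \<Rightarrow> nat) \<Rightarrow> ('a, 'l) tgraph \<Rightarrow> ('b, 'l) tgraph \<Rightarrow> ('a \<Rightarrow> 'b) \<Rightarrow>
   ('g, 'l) tgraph \<Rightarrow> ('a \<Rightarrow> 'g) \<Rightarrow> ('h, 'l) tgraph \<Rightarrow> ('g \<Rightarrow> 'h) \<Rightarrow> ('b \<Rightarrow> 'h) \<Rightarrow> bool" where
  "het_cone ar L R \<tau> G m H \<tau>1 d \<longleftrightarrow> wf_graph ar H \<and> \<tau>1 ` nodes G \<subseteq> nodes H \<and>
     graph_morphism R H d \<and> (\<forall>n\<in>nodes L. d (\<tau> n) = \<tau>1 (m n)) \<and>
     graphic_on G H \<tau>1 (nodes G - m ` nodes L)"

definition het_cone_morphism ::
  "('g, 'l) tgraph \<Rightarrow> ('b, 'l) tgraph \<Rightarrow> ('h, 'l) tgraph \<Rightarrow> ('g \<Rightarrow> 'h) \<Rightarrow> ('b \<Rightarrow> 'h) \<Rightarrow>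
   ('k, 'l) tgraph \<Rightarrow> ('g \<Rightarrow> 'k) \<Rightarrow> ('b \<Rightarrow> 'k) \<Rightarrow> ('h \<Rightarrow> 'k) \<Rightarrow> bool" where
  "het_cone_morphism G R H \<tau>1 d H' \<tau>1' d' h \<longleftrightarrow> graph_morphism H H' h \<and>
     (\<forall>x\<in>nodes G. h (\<tau>1 x) = \<tau>1' x) \<and> (\<forall>x\<in>nodes R. h (d x) = d' x)"

text \<open>Initiality is tested
  against all cones whose node type is 'k (given by the itself argument);
  morphisms are identified when they agree on the nodes of H.\<close>
definition het_pushout ::
  "'k itself \<Rightarrow> ('l \<Rightarrow> nat) \<Rightarrow> ('a, 'l) tgraph \<Rightarrow> ('b, 'l) tgraph \<Rightarrow> ('a \<Rightarrow> 'b) \<Rightarrow>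
   ('g, 'l) tgraph \<Rightarrow> ('a \<Rightarrow> 'g) \<Rightarrow> ('h, 'l) tgraph \<Rightarrow> ('g \<Rightarrow> 'h) \<Rightarrow> ('b \<Rightarrow> 'h) \<Rightarrow> bool" where
  "het_pushout _ ar L R \<tau> G m H \<tau>1 d \<longleftrightarrow> het_cone ar L R \<tau> G m H \<tau>1 d \<and>
     (\<forall>(H' :: ('k, 'l) tgraph) \<tau>1' d'. het_cone ar L R \<tau> G m H' \<tau>1' d' \<longrightarrow>
        (\<exists>h. het_cone_morphism G R H \<tau>1 d H' \<tau>1' d' h \<and>
           (\<forall>h'. het_cone_morphism G R H \<tau>1 d H' \<tau>1' d' h' \<longrightarrow> (\<forall>x\<in>nodes H. h' x = h x))))"

text \<open>The universal property is tested against
  all sets X of elements of type 'x (given by the itself argument).\<close>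
definition set_pushout ::
  "'x itself \<Rightarrow> 'a set \<Rightarrow> 'b set \<Rightarrow> 'g set \<Rightarrow> ('a \<Rightarrow> 'b) \<Rightarrow> ('a \<Rightarrow> 'g) \<Rightarrow>
   'h set \<Rightarrow> ('g \<Rightarrow> 'h) \<Rightarrow> ('b \<Rightarrow> 'h) \<Rightarrow> bool" where
  "set_pushout _ NL NR NG \<tau> m HH \<tau>1 \<delta> \<longleftrightarrow>
     \<tau>1 ` NG \<subseteq> HH \<and> \<delta> ` NR \<subseteq> HH \<and> (\<forall>x\<in>NL. \<delta> (\<tau> x) = \<tau>1 (m x)) \<and>
     (\<forall>(X :: 'x set) f g. f ` NG \<subseteq> X \<and> g ` NR \<subseteq> X \<and> (\<forall>x\<in>NL. g (\<tau> x) = f (m x)) \<longrightarrow>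
        (\<exists>u. u ` HH \<subseteq> X \<and> (\<forall>y\<in>NG. u (\<tau>1 y) = f y) \<and> (\<forall>z\<in>NR. u (\<delta> z) = g z) \<and>
           (\<forall>u'. u' ` HH \<subseteq> X \<and> (\<forall>y\<in>NG. u' (\<tau>1 y) = f y) \<and> (\<forall>z\<in>NR. u' (\<delta> z) = g z)
                \<longrightarrow> (\<forall>w\<in>HH. u' w = u w))))"

definition pushout_graph_cond ::
  "('l \<Rightarrow> nat) \<Rightarrow> ('a, 'l) tgraph \<Rightarrow> ('b, 'l) tgraph \<Rightarrow> ('g, 'l) tgraph \<Rightarrow> ('a \<Rightarrow> 'g) \<Rightarrow>
   'h set \<Rightarrow> ('g \<Rightarrow> 'h) \<Rightarrow> ('b \<Rightarrow> 'h) \<Rightarrow> ('h, 'l) tgraph \<Rightarrow> bool" where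
  "pushout_graph_cond ar L R G m HH \<tau>1 \<delta> H \<longleftrightarrow> wf_graph ar H \<and> nodes H = HH \<and>
     strictly_graphic_on G H \<tau>1 (nodes G - m ` nodes L) \<and>
     strictly_graphic_on R H \<delta> (nodes R)"

end

theory Submission
  imports Defs
begin

text \<open>Because m is injective, the set pushout of \<tau> and m is the disjoint union of |R| and
  |G| - m(L), with \<tau>1 and \<delta> injective on these two parts; this is read off by mapping a given
  set pushout into an explicit disjoint union.  Strict graphicity then prescribes label and
  successors of every node of H, so H exists and is unique.  A heterogeneous cone
  (H', \<tau>1', d') factors through the set pushout, and the factoring map is a graph morphism
  because every labeled node of H comes from a labeled node of R, where d' is a morphism, or
  from a labeled node of G - m(L), where \<tau>1' is graphic.\<close>

section \<open>Gluing along an injective match, at the level of sets\<close>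

lemma cocone_image_subset:
  assumes "\<forall>x\<in>NL. \<delta> (\<tau> x) = \<tau>1 (m x)" and "\<tau> ` NL \<subseteq> NR"
  shows "\<tau>1 ` NG \<subseteq> \<tau>1 ` (NG - m ` NL) \<union> \<delta> ` NR"
proof
  fix w assume "w \<in> \<tau>1 ` NG"
  then obtain y where y: "y \<in> NG" "w = \<tau>1 y" by blast
  show "w \<in> \<tau>1 ` (NG - m ` NL) \<union> \<delta> ` NR"
  proof (cases "y \<in> m ` NL")
    case True
    then obtain x where "x \<in> NL" "y = m x" by blast
    with assms y have "w = \<delta> (\<tau> x)" "\<tau> x \<in> NR" by auto
    then show ?thesis by blast
  next
    case False
    with y show ?thesis by blast
  qed
qed

locale disjoint_union_cocone =
  fixes NL :: "'a set" and NR :: "'b set" and NG :: "'g set"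
    and \<tau> :: "'a \<Rightarrow> 'b" and m :: "'a \<Rightarrow> 'g"
    and HH :: "'h set" and \<tau>1 :: "'g \<Rightarrow> 'h" and \<delta> :: "'b \<Rightarrow> 'h"
  assumes tau_into: "\<tau> ` NL \<subseteq> NR"
    and commute: "\<forall>x\<in>NL. \<delta> (\<tau> x) = \<tau>1 (m x)"
    and inj_tau1: "inj_on \<tau>1 (NG - m ` NL)"
    and inj_delta: "inj_on \<delta> NR"
    and disjoint: "\<tau>1 ` (NG - m ` NL) \<inter> \<delta> ` NR = {}"
    and carrier_eq: "HH = \<tau>1 ` (NG - m ` NL) \<union> \<delta> ` NR"
begin

lemma tau1_into: "\<tau>1 ` NG \<subseteq> HH"
  using cocone_image_subset[where NG = NG, OF commute tau_into] carrier_eq by simp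

lemma carrier_cases:
  assumes "w \<in> HH"
  obtains (from_G) g where "g \<in> NG - m ` NL" "w = \<tau>1 g" | (from_R) r where "r \<in> NR" "w = \<delta> r"
  using assms carrier_eq by blast

lemma mediating_map:
  assumes fg: "\<forall>x\<in>NL. g (\<tau> x) = f (m x)"
  obtains u where "\<forall>y\<in>NG. u (\<tau>1 y) = f y" and "\<forall>z\<in>NR. u (\<delta> z) = g z"
proof
  define u where "u w = (if w \<in> \<delta> ` NR then g (inv_into NR \<delta> w)
    else f (inv_into (NG - m ` NL) \<tau>1 w))" for w
  show u_delta: "\<forall>z\<in>NR. u (\<delta> z) = g z"
    using inj_delta by (simp add: u_def)
  show "\<forall>y\<in>NG. u (\<tau>1 y) = f y"
  proof
    fix y assume y: "y \<in> NG"
    show "u (\<tau>1 y) = f y"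
    proof (cases "y \<in> m ` NL")
      case True
      then obtain x where "x \<in> NL" "y = m x" by blast
      then show ?thesis using commute u_delta fg tau_into by (metis image_subset_iff)
    next
      case False
      with y disjoint inj_tau1 show ?thesis by (auto simp: u_def)
    qed
  qed
qed

lemma eq_on_carrier:
  assumes "\<forall>y\<in>NG. u (\<tau>1 y) = u' (\<tau>1 y)" and "\<forall>z\<in>NR. u (\<delta> z) = u' (\<delta> z)"
  shows "\<forall>w\<in>HH. u w = u' w"
  using assms carrier_eq by blast

end

text \<open>The node type ('g + 'b) set of the theorem is used through singletons, which
  suffice because m is injective.\<close>
definition canonical_tau1 :: "'a set \<Rightarrow> ('a \<Rightarrow> 'g) \<Rightarrow> ('a \<Rightarrow> 'b) \<Rightarrow> 'g \<Rightarrow> ('g + 'b) set" where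
  "canonical_tau1 NL m \<tau> g = (if g \<in> m ` NL then {Inr (\<tau> (inv_into NL m g))} else {Inl g})"

lemma disjoint_union_cocone_canonical:
  assumes "inj_on m NL" and "\<tau> ` NL \<subseteq> NR"
  shows "disjoint_union_cocone NL NR NG \<tau> m
    (canonical_tau1 NL m \<tau> ` (NG - m ` NL) \<union> (\<lambda>r. {Inr r}) ` NR) (canonical_tau1 NL m \<tau>) (\<lambda>r. {Inr r})"
proof -
  have off_match: "canonical_tau1 NL m \<tau> g = {Inl g}" if "g \<notin> m ` NL" for g
    using that by (simp add: canonical_tau1_def)
  show ?thesis
  proof
    show "\<forall>x\<in>NL. {Inr (\<tau> x)} = canonical_tau1 NL m \<tau> (m x)"
      using assms(1) by (simp add: canonical_tau1_def)
    show "inj_on (canonical_tau1 NL m \<tau>) (NG - m ` NL)"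
      by (rule inj_onI) (simp add: off_match)
    show "inj_on (\<lambda>r. {Inr r}) NR"
      by (rule inj_onI) simp
    show "canonical_tau1 NL m \<tau> ` (NG - m ` NL) \<inter> (\<lambda>r. {Inr r}) ` NR = {}"
      using off_match by auto
  qed (use assms(2) in simp_all)
qed

lemma set_pushout_cocone:
  assumes "set_pushout X NL NR NG \<tau> m HH \<tau>1 \<delta>"
  shows "\<tau>1 ` NG \<subseteq> HH" and "\<delta> ` NR \<subseteq> HH" and "\<forall>x\<in>NL. \<delta> (\<tau> x) = \<tau>1 (m x)"
  using assms by (simp_all add: set_pushout_def)

lemma set_pushout_mediating:
  fixes f :: "'g \<Rightarrow> 'x" and g :: "'b \<Rightarrow> 'x"
  assumes sp: "set_pushout TYPE('x) NL NR NG \<tau> m HH \<tau>1 \<delta>"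
    and fg: "\<forall>x\<in>NL. g (\<tau> x) = f (m x)"
  obtains u where "\<forall>y\<in>NG. u (\<tau>1 y) = f y" and "\<forall>z\<in>NR. u (\<delta> z) = g z"
    and "\<And>u'. \<forall>y\<in>NG. u' (\<tau>1 y) = f y \<Longrightarrow> \<forall>z\<in>NR. u' (\<delta> z) = g z \<Longrightarrow> \<forall>w\<in>HH. u' w = u w"
proof -
  have "f ` NG \<subseteq> UNIV \<and> g ` NR \<subseteq> UNIV \<and> (\<forall>x\<in>NL. g (\<tau> x) = f (m x)) \<longrightarrow>
      (\<exists>u. u ` HH \<subseteq> UNIV \<and> (\<forall>y\<in>NG. u (\<tau>1 y) = f y) \<and> (\<forall>z\<in>NR. u (\<delta> z) = g z) \<and>
        (\<forall>u'. u' ` HH \<subseteq> UNIV \<and> (\<forall>y\<in>NG. u' (\<tau>1 y) = f y) \<and> (\<forall>z\<in>NR. u' (\<delta> z) = g z)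
           \<longrightarrow> (\<forall>w\<in>HH. u' w = u w)))"
    using sp unfolding set_pushout_def by (elim conjE allE[of _ UNIV] allE[of _ f] allE[of _ g])
  with fg obtain u where "\<forall>y\<in>NG. u (\<tau>1 y) = f y" and "\<forall>z\<in>NR. u (\<delta> z) = g z"
    and "\<forall>u'. (\<forall>y\<in>NG. u' (\<tau>1 y) = f y) \<and> (\<forall>z\<in>NR. u' (\<delta> z) = g z) \<longrightarrow> (\<forall>w\<in>HH. u' w = u w)"
    by auto
  then show thesis using that by blast
qed

lemma set_pushout_unique:
  fixes u u' :: "'h \<Rightarrow> 'x"
  assumes sp: "set_pushout TYPE('x) NL NR NG \<tau> m HH \<tau>1 \<delta>"
    and "\<forall>y\<in>NG. u (\<tau>1 y) = u' (\<tau>1 y)" and "\<forall>z\<in>NR. u (\<delta> z) = u' (\<delta> z)"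
  shows "\<forall>w\<in>HH. u w = u' w"
proof -
  have "\<forall>x\<in>NL. (u' \<circ> \<delta>) (\<tau> x) = (u' \<circ> \<tau>1) (m x)"
    using set_pushout_cocone(3)[OF sp] by simp
  then show ?thesis
  proof (rule set_pushout_mediating[OF sp])
    fix v assume mediating_unique: "\<And>v'. \<forall>y\<in>NG. v' (\<tau>1 y) = (u' \<circ> \<tau>1) y \<Longrightarrow>
      \<forall>z\<in>NR. v' (\<delta> z) = (u' \<circ> \<delta>) z \<Longrightarrow> \<forall>w\<in>HH. v' w = v w"
    have "\<forall>w\<in>HH. u w = v w"
      by (rule mediating_unique) (use assms(2,3) in simp_all)
    moreover have "\<forall>w\<in>HH. u' w = v w"
      by (rule mediating_unique) simp_all
    ultimately show ?thesis by simp
  qed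
qed

text \<open>A node outside the images could be sent to two different values by mediating maps.\<close>
lemma set_pushout_covered:
  fixes HH :: "'h set"
  assumes sp: "set_pushout TYPE('x set) NL NR NG \<tau> m HH \<tau>1 \<delta>"
  shows "HH \<subseteq> \<tau>1 ` NG \<union> \<delta> ` NR"
proof
  fix w assume w: "w \<in> HH"
  show "w \<in> \<tau>1 ` NG \<union> \<delta> ` NR"
  proof (rule ccontr)
    assume uncovered: "w \<notin> \<tau>1 ` NG \<union> \<delta> ` NR"
    have "\<forall>v\<in>HH. (\<lambda>_. {}) v = ((\<lambda>_. {})(w := UNIV :: 'x set)) v"
      by (rule set_pushout_unique[OF sp]) (use uncovered in auto)
    with w show False by (metis fun_upd_same empty_not_UNIV)
  qed
qed

lemma set_pushout_disjoint_union_cocone: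
  fixes NR :: "'b set" and NG :: "'g set"
  assumes sp: "set_pushout TYPE(('g + 'b) set) NL NR NG \<tau> m HH \<tau>1 \<delta>"
    and inj_m: "inj_on m NL" and tau_into: "\<tau> ` NL \<subseteq> NR"
  shows "disjoint_union_cocone NL NR NG \<tau> m HH \<tau>1 \<delta>"
proof -
  interpret canonical: disjoint_union_cocone NL NR NG \<tau> m
    "canonical_tau1 NL m \<tau> ` (NG - m ` NL) \<union> (\<lambda>r. {Inr r}) ` NR" "canonical_tau1 NL m \<tau>" "\<lambda>r. {Inr r}"
    using disjoint_union_cocone_canonical[OF inj_m tau_into] .
  note images = set_pushout_cocone(1,2)[OF sp] and commute = set_pushout_cocone(3)[OF sp]
  obtain u where u_tau1: "\<forall>y\<in>NG. u (\<tau>1 y) = canonical_tau1 NL m \<tau> y"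
    and u_delta: "\<forall>z\<in>NR. u (\<delta> z) = {Inr z}"
    using canonical.commute
    by (rule set_pushout_mediating[OF sp, where f = "canonical_tau1 NL m \<tau>" and g = "\<lambda>r. {Inr r}"])
  show ?thesis
  proof
    show "inj_on \<tau>1 (NG - m ` NL)"
    proof (rule inj_onI)
      fix a b assume a: "a \<in> NG - m ` NL" and b: "b \<in> NG - m ` NL" and "\<tau>1 a = \<tau>1 b"
      then have "canonical_tau1 NL m \<tau> a = canonical_tau1 NL m \<tau> b"
        using u_tau1 by (metis DiffD1)
      with a b show "a = b"
        using canonical.inj_tau1 by (simp add: inj_on_eq_iff)
    qed
    show "inj_on \<delta> NR"
    proof (rule inj_onI)
      fix a b assume "a \<in> NR" "b \<in> NR" "\<delta> a = \<delta> b"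
      then have "{Inr a} = ({Inr b} :: ('g + 'b) set)"
        using u_delta by metis
      then show "a = b" by simp
    qed
    show "\<tau>1 ` (NG - m ` NL) \<inter> \<delta> ` NR = {}"
    proof (rule equals0I)
      fix w assume "w \<in> \<tau>1 ` (NG - m ` NL) \<inter> \<delta> ` NR"
      then obtain a r where "a \<in> NG - m ` NL" "r \<in> NR" "\<tau>1 a = \<delta> r"
        by (metis IntD1 IntD2 imageE)
      then have "canonical_tau1 NL m \<tau> a = {Inr r}"
        using u_tau1 u_delta by (metis DiffD1)
      with \<open>a \<in> NG - m ` NL\<close> \<open>r \<in> NR\<close> show False
        using canonical.disjoint by blast
    qed
    have "HH \<subseteq> \<tau>1 ` NG \<union> \<delta> ` NR"
      by (rule set_pushout_covered[OF sp])
    also have "\<dots> \<subseteq> \<tau>1 ` (NG - m ` NL) \<union> \<delta> ` NR"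
      using cocone_image_subset[where NG = NG, OF commute tau_into] by (simp add: Un_least)
    finally show "HH = \<tau>1 ` (NG - m ` NL) \<union> \<delta> ` NR"
      using images by auto
  qed (fact tau_into, fact commute)
qed

section \<open>The glued graph\<close>

lemma strictly_graphic_onD:
  assumes "strictly_graphic_on G H \<gamma> S" and "n \<in> S"
  shows "\<gamma> n \<in> labeled H \<longleftrightarrow> n \<in> labeled G"
    and "n \<in> labeled G \<Longrightarrow> lab H (\<gamma> n) = lab G n \<and> succ H (\<gamma> n) = map \<gamma> (succ G n)"
  using assms by (auto simp: strictly_graphic_on_def strictly_graphic_at_def)

lemma strictly_graphic_on_imp_graphic_on:
  "strictly_graphic_on G H \<gamma> S \<Longrightarrow> graphic_on G H \<gamma> S"
  by (auto simp: strictly_graphic_on_def strictly_graphic_at_def graphic_on_def graphic_at_def)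

locale graph_gluing = disjoint_union_cocone "nodes L" "nodes R" "nodes G" \<tau> m HH \<tau>1 \<delta>
  for ar :: "'l \<Rightarrow> nat" and L :: "('a, 'l) tgraph" and R :: "('b, 'l) tgraph" and G :: "('g, 'l) tgraph"
    and \<tau> :: "'a \<Rightarrow> 'b" and m :: "'a \<Rightarrow> 'g"
    and HH :: "'h set" and \<tau>1 :: "'g \<Rightarrow> 'h" and \<delta> :: "'b \<Rightarrow> 'h" +
  assumes wf_R: "wf_graph ar R" and wf_G: "wf_graph ar G"
begin

lemma labeled_R: "labeled R \<subseteq> nodes R"
  and succ_R: "r \<in> labeled R \<Longrightarrow> set (succ R r) \<subseteq> nodes R \<and> length (succ R r) = ar (lab R r)"
  and labeled_G: "labeled G \<subseteq> nodes G"
  and succ_G: "g \<in> labeled G \<Longrightarrow> set (succ G g) \<subseteq> nodes G \<and> length (succ G g) = ar (lab G g)"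
  using wf_R wf_G by (auto simp: wf_graph_def)

definition glued_graph :: "('h, 'l) tgraph" where
  "glued_graph = \<lparr>nodes = HH, labeled = \<tau>1 ` (labeled G - m ` nodes L) \<union> \<delta> ` labeled R,
     lab = (\<lambda>w. if w \<in> \<delta> ` nodes R then lab R (inv_into (nodes R) \<delta> w)
                else lab G (inv_into (nodes G - m ` nodes L) \<tau>1 w)),
     succ = (\<lambda>w. if w \<in> \<delta> ` nodes R then map \<delta> (succ R (inv_into (nodes R) \<delta> w))
                 else map \<tau>1 (succ G (inv_into (nodes G - m ` nodes L) \<tau>1 w)))\<rparr>"

lemma glued_graph_delta:
  assumes "r \<in> nodes R"
  shows "\<delta> r \<in> labeled glued_graph \<longleftrightarrow> r \<in> labeled R"
    and "lab glued_graph (\<delta> r) = lab R r" and "succ glued_graph (\<delta> r) = map \<delta> (succ R r)"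
  using assms labeled_R labeled_G inj_delta disjoint
  by (auto simp: glued_graph_def inj_on_eq_iff)

lemma glued_graph_tau1:
  assumes "g \<in> nodes G - m ` nodes L"
  shows "\<tau>1 g \<in> labeled glued_graph \<longleftrightarrow> g \<in> labeled G"
    and "lab glued_graph (\<tau>1 g) = lab G g" and "succ glued_graph (\<tau>1 g) = map \<tau>1 (succ G g)"
  using assms labeled_G labeled_R inj_tau1 disjoint
  by (auto simp: glued_graph_def inj_on_eq_iff)

lemma glued_graph_cond: "pushout_graph_cond ar L R G m HH \<tau>1 \<delta> glued_graph"
  unfolding pushout_graph_cond_def
proof (intro conjI)
  have labeled_in: "labeled glued_graph \<subseteq> HH"
    unfolding glued_graph_def using labeled_G labeled_R carrier_eq by auto
  have succ_in: "set (succ glued_graph w) \<subseteq> HH \<and> length (succ glued_graph w) = ar (lab glued_graph w)"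
    if w: "w \<in> labeled glued_graph" for w
  proof -
    consider (from_G) g where "g \<in> labeled G - m ` nodes L" "w = \<tau>1 g"
      | (from_R) r where "r \<in> labeled R" "w = \<delta> r"
      using w unfolding glued_graph_def by auto
    then show ?thesis
    proof cases
      case from_G
      with labeled_G have g: "g \<in> nodes G - m ` nodes L" by auto
      have "set (map \<tau>1 (succ G g)) \<subseteq> HH"
        using succ_G[of g] from_G tau1_into by auto
      then show ?thesis
        using from_G glued_graph_tau1[OF g] succ_G[of g] by simp
    next
      case from_R
      with labeled_R have r: "r \<in> nodes R" by auto
      have "set (map \<delta> (succ R r)) \<subseteq> HH"
        using succ_R[of r] from_R carrier_eq by auto
      then show ?thesis
        using from_R glued_graph_delta[OF r] succ_R[of r] by simp
    qed
  qed
  show "wf_graph ar glued_graph"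
    using labeled_in succ_in by (simp add: wf_graph_def glued_graph_def)
  show "nodes glued_graph = HH"
    by (simp add: glued_graph_def)
  show "strictly_graphic_on G glued_graph \<tau>1 (nodes G - m ` nodes L)"
    using glued_graph_tau1 by (auto simp: strictly_graphic_on_def strictly_graphic_at_def)
  show "strictly_graphic_on R glued_graph \<delta> (nodes R)"
    using glued_graph_delta by (auto simp: strictly_graphic_on_def strictly_graphic_at_def)
qed

context
  fixes H :: "('h, 'l) tgraph"
  assumes cond: "pushout_graph_cond ar L R G m HH \<tau>1 \<delta> H"
begin

lemma nodes_H: "nodes H = HH"
  and labeled_H: "labeled H \<subseteq> HH"
  and strict_tau1: "strictly_graphic_on G H \<tau>1 (nodes G - m ` nodes L)"
  and strict_delta: "strictly_graphic_on R H \<delta> (nodes R)"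
  using cond by (auto simp: pushout_graph_cond_def wf_graph_def)

lemma pushout_graph_cond_delta_morphism: "graph_morphism R H \<delta>"
  using strictly_graphic_onD[OF strict_delta] labeled_R carrier_eq nodes_H
  by (auto simp: graph_morphism_def)

lemma pushout_graph_cond_het_cone: "het_cone ar L R \<tau> G m H \<tau>1 \<delta>"
  using cond pushout_graph_cond_delta_morphism commute tau1_into nodes_H
    strictly_graphic_on_imp_graphic_on[OF strict_tau1]
  by (simp add: het_cone_def pushout_graph_cond_def)

end

lemma pushout_graph_cond_unique:
  assumes "pushout_graph_cond ar L R G m HH \<tau>1 \<delta> H" and "pushout_graph_cond ar L R G m HH \<tau>1 \<delta> H'"
  shows "same_graph H H'"
proof -
  note H = strictly_graphic_onD[OF strict_tau1[OF assms(1)]] strictly_graphic_onD[OF strict_delta[OF assms(1)]]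
    and H' = strictly_graphic_onD[OF strict_tau1[OF assms(2)]] strictly_graphic_onD[OF strict_delta[OF assms(2)]]
  have agree: "(w \<in> labeled H \<longleftrightarrow> w \<in> labeled H') \<and>
      (w \<in> labeled H \<longrightarrow> lab H w = lab H' w \<and> succ H w = succ H' w)" if "w \<in> HH" for w
    using that by (cases rule: carrier_cases) (simp_all add: H H')
  show ?thesis
    using agree labeled_H[OF assms(1)] labeled_H[OF assms(2)] nodes_H[OF assms(1)] nodes_H[OF assms(2)]
    unfolding same_graph_def by blast
qed

lemma mediating_graph_morphism:
  assumes cond: "pushout_graph_cond ar L R G m HH \<tau>1 \<delta> H"
    and cone: "het_cone ar L R \<tau> G m H' \<tau>1' d'"
    and u_tau1: "\<forall>y\<in>nodes G. u (\<tau>1 y) = \<tau>1' y" and u_delta: "\<forall>z\<in>nodes R. u (\<delta> z) = d' z"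
  shows "graph_morphism H H' u"
proof -
  have tau1'_into: "\<tau>1' ` nodes G \<subseteq> nodes H'" and d': "graph_morphism R H' d'"
    and graphic': "graphic_on G H' \<tau>1' (nodes G - m ` nodes L)"
    using cone by (auto simp: het_cone_def)
  have "u w \<in> nodes H' \<and> (w \<in> labeled H \<longrightarrow>
      u w \<in> labeled H' \<and> lab H' (u w) = lab H w \<and> succ H' (u w) = map u (succ H w))"
    if "w \<in> HH" for w
    using that
  proof (cases rule: carrier_cases)
    case (from_G g)
    note H = strictly_graphic_onD[OF strict_tau1[OF cond] from_G(1)]
    have "map u (map \<tau>1 (succ G g)) = map \<tau>1' (succ G g)" if "g \<in> labeled G"
      using succ_G[OF that] u_tau1 by (auto simp: subset_iff)
    then show ?thesis
      using from_G H u_tau1 tau1'_into graphic'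
      by (auto simp: graphic_on_def graphic_at_def)
  next
    case (from_R r)
    note H = strictly_graphic_onD[OF strict_delta[OF cond] from_R(1)]
    have "map u (map \<delta> (succ R r)) = map d' (succ R r)" if "r \<in> labeled R"
      using succ_R[OF that] u_delta by (auto simp: subset_iff)
    then show ?thesis
      using from_R H u_delta d' by (auto simp: graph_morphism_def)
  qed
  then show ?thesis
    using nodes_H[OF cond] labeled_H[OF cond] by (auto simp: graph_morphism_def)
qed

lemma pushout_graph_cond_het_pushout:
  assumes cond: "pushout_graph_cond ar L R G m HH \<tau>1 \<delta> H"
  shows "het_pushout TYPE('k) ar L R \<tau> G m H \<tau>1 \<delta>"
  unfolding het_pushout_def
proof (intro conjI allI impI)
  show "het_cone ar L R \<tau> G m H \<tau>1 \<delta>"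
    by (rule pushout_graph_cond_het_cone[OF cond])
  fix H' :: "('k, 'l) tgraph" and \<tau>1' d'
  assume cone: "het_cone ar L R \<tau> G m H' \<tau>1' d'"
  then have "\<forall>x\<in>nodes L. d' (\<tau> x) = \<tau>1' (m x)"
    by (simp add: het_cone_def)
  then obtain u where u_tau1: "\<forall>y\<in>nodes G. u (\<tau>1 y) = \<tau>1' y" and u_delta: "\<forall>z\<in>nodes R. u (\<delta> z) = d' z"
    by (rule mediating_map)
  show "\<exists>h. het_cone_morphism G R H \<tau>1 \<delta> H' \<tau>1' d' h \<and>
      (\<forall>h'. het_cone_morphism G R H \<tau>1 \<delta> H' \<tau>1' d' h' \<longrightarrow> (\<forall>x\<in>nodes H. h' x = h x))"
  proof (intro exI conjI allI impI)
    show "het_cone_morphism G R H \<tau>1 \<delta> H' \<tau>1' d' u"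
      using mediating_graph_morphism[OF cond cone u_tau1 u_delta] u_tau1 u_delta
      by (simp add: het_cone_morphism_def)
    fix h' assume "het_cone_morphism G R H \<tau>1 \<delta> H' \<tau>1' d' h'"
    then show "\<forall>x\<in>nodes H. h' x = u x"
      using eq_on_carrier[of h' u] u_tau1 u_delta nodes_H[OF cond]
      by (simp add: het_cone_morphism_def)
  qed
qed

end

theorem mainTheorem2:
  fixes ar :: "'l \<Rightarrow> nat"
    and L :: "('a, 'l) tgraph" and R :: "('b, 'l) tgraph" and G :: "('g, 'l) tgraph"
    and \<tau> :: "'a \<Rightarrow> 'b" and m :: "'a \<Rightarrow> 'g"
  assumes "wf_graph ar L" and "wf_graph ar R" and "wf_graph ar G"
    and "\<tau> ` nodes L \<subseteq> nodes R"
    and "graph_morphism L G m"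
    and "inj_on m (nodes L)"
  shows "(\<exists>(H :: (('g + 'b) set, 'l) tgraph) \<tau>1 d. het_pushout TYPE('k) ar L R \<tau> G m H \<tau>1 d) \<and>
    (\<forall>(HH :: 'h set) \<tau>1 \<delta>.
       set_pushout TYPE(('g + 'b) set) (nodes L) (nodes R) (nodes G) \<tau> m HH \<tau>1 \<delta> \<longrightarrow>
       (\<exists>H. pushout_graph_cond ar L R G m HH \<tau>1 \<delta> H) \<and>
       (\<forall>H H'. pushout_graph_cond ar L R G m HH \<tau>1 \<delta> H \<and> pushout_graph_cond ar L R G m HH \<tau>1 \<delta> H'
           \<longrightarrow> same_graph H H') \<and>
       (\<forall>H. pushout_graph_cond ar L R G m HH \<tau>1 \<delta> H \<longrightarrow>
           graph_morphism R H \<delta> \<and> het_pushout TYPE('k) ar L R \<tau> G m H \<tau>1 \<delta>))"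
proof -
  note wf = graph_gluing_axioms.intro[OF assms(2,3)]
    and tau_into = assms(4) and inj_m = assms(6)
  interpret canonical: graph_gluing ar L R G \<tau> m
    "canonical_tau1 (nodes L) m \<tau> ` (nodes G - m ` nodes L) \<union> (\<lambda>r. {Inr r}) ` nodes R"
    "canonical_tau1 (nodes L) m \<tau>" "\<lambda>r. {Inr r}"
    by (rule graph_gluing.intro[OF disjoint_union_cocone_canonical[OF inj_m tau_into] wf])
  have "\<exists>(H :: (('g + 'b) set, 'l) tgraph) \<tau>1 d. het_pushout TYPE('k) ar L R \<tau> G m H \<tau>1 d"
    using canonical.pushout_graph_cond_het_pushout[OF canonical.glued_graph_cond] by blast
  moreover
  {
    fix HH :: "'h set" and \<tau>1 \<delta>
    assume "set_pushout TYPE(('g + 'b) set) (nodes L) (nodes R) (nodes G) \<tau> m HH \<tau>1 \<delta>"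
    then interpret graph_gluing ar L R G \<tau> m HH \<tau>1 \<delta>
      by (rule graph_gluing.intro[OF set_pushout_disjoint_union_cocone[OF _ inj_m tau_into] wf])
    have "(\<exists>H. pushout_graph_cond ar L R G m HH \<tau>1 \<delta> H) \<and>
       (\<forall>H H'. pushout_graph_cond ar L R G m HH \<tau>1 \<delta> H \<and> pushout_graph_cond ar L R G m HH \<tau>1 \<delta> H'
           \<longrightarrow> same_graph H H') \<and>
       (\<forall>H. pushout_graph_cond ar L R G m HH \<tau>1 \<delta> H \<longrightarrow>
           graph_morphism R H \<delta> \<and> het_pushout TYPE('k) ar L R \<tau> G m H \<tau>1 \<delta>)"
      using glued_graph_cond pushout_graph_cond_unique pushout_graph_cond_delta_morphism
        pushout_graph_cond_het_pushout by blast
  }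
  ultimately show ?thesis by blast
qed

end
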